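(* Define, for $x\ge 0$, $$f(x):=\frac12\,\mathrm{Erfc}\Big(-\frac{x}{2\sqrt2}\Big)+\frac12\,e^{3x^2}\,\mathrm{Erfc}\Big(\frac{5x}{2\sqrt2}\Big).$$ Then for all $x\ge 0$, $$f(x)\ge N\Big(\frac1{\sqrt5}\Big)+\frac1{12}\sqrt{\frac{10}{\pi}}\,e^{-1/10}\ (\approx 0.8072).$$
   Context: $\mathrm{Erfc}(x):=\frac{2}{\sqrt\pi}\int_x^\infty e^{-v^2}dv$ for $x\in\mathbb{R}$, and $N(x):=\frac1{\sqrt{2\pi}}\int_{-\infty}^x e^{-v^2/2}dv$ is the standard normal distribution function. *)

theory Defs
  imports "HOL-Analysis.Analysis"
begin

definition Erfc :: "real \<Rightarrow> real" where
  "Erfc x = 2 / sqrt pi * (LBINT v:{x..}. exp (- (v\<^sup>2)))"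

definition N :: "real \<Rightarrow> real" where
  "N x = 1 / sqrt (2 * pi) * (LBINT v:{..x}. exp (- (v\<^sup>2) / 2))"

definition f :: "real \<Rightarrow> real" where
  "f x = 1/2 * Erfc (- x / (2 * sqrt 2)) + 1/2 * exp (3 * x\<^sup>2) * Erfc (5 * x / (2 * sqrt 2))"

end

theory Submission
  imports Defs "HOL-Probability.Probability" "HOL-Real_Asymp.Real_Asymp"
begin

text \<open>
  Write G t for the Gaussian tail integral of exp (- v^2 / 2) over [t, \<infinity>) and
  R t = exp (t^2 / 2) * G t for Mills' ratio. With u = x / 2 one has
  sqrt (2 * pi) * f x = F u = G (- u) + exp (- u^2 / 2) * R (5 * u), and
  F' u = 4 * exp (- u^2 / 2) * (6 * u * R (5 * u) - 1).
  Mills' inequality R t \<ge> t / (1 + t^2) makes t * R t increasing, so F first decreases and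
  then increases, and its minimum on [0, \<infinity>) is attained at some w \<le> 1 / sqrt 5 with
  6 * w * R (5 * w) = 1. Wherever 6 * u * R (5 * u) \<ge> 1, F u is at least
  K u = G (- u) + exp (- u^2 / 2) / (6 * u), and K is minimal on (0, \<infinity>) at 1 / sqrt 5,
  where K / sqrt (2 * pi) is exactly the claimed bound.
\<close>

definition gauss_tail :: "real \<Rightarrow> real" where
  "gauss_tail t = (LBINT v:{t..}. exp (- v\<^sup>2 / 2))"

lemma integrable_gauss: "integrable lborel (\<lambda>v::real. exp (- v\<^sup>2 / 2))"
proof -
  have "integrable lborel (\<lambda>v. sqrt (2 * pi) * std_normal_density v)"
    by (intro integrable_mult_right) simp
  then show ?thesis by (simp add: std_normal_density_def)
qed

lemma set_integrable_gauss: "A \<in> sets borel \<Longrightarrow> set_integrable lborel A (\<lambda>v::real. exp (- v\<^sup>2 / 2))"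
  using integrable_gauss unfolding set_integrable_def by (intro integrable_mult_indicator) auto

lemma gauss_tail_split:
  "a \<le> b \<Longrightarrow> gauss_tail a = (LBINT v=a..b. exp (- v\<^sup>2 / 2)) + gauss_tail b"
proof -
  assume "a \<le> b"
  then have "{a..} = {a..<b} \<union> {b..}" by auto
  then have "gauss_tail a = (LBINT v:{a..<b} \<union> {b..}. exp (- v\<^sup>2 / 2))"
    by (simp add: gauss_tail_def)
  also have "\<dots> = (LBINT v:{a..<b}. exp (- v\<^sup>2 / 2)) + gauss_tail b"
    unfolding gauss_tail_def by (intro set_integral_Un set_integrable_gauss) auto
  finally show ?thesis using \<open>a \<le> b\<close> by (simp add: interval_integral_Ico)
qed

lemma gauss_tail_has_real_derivative:
  "(gauss_tail has_real_derivative - exp (- t\<^sup>2 / 2)) (at t)"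
proof -
  let ?I = "\<lambda>u. LBINT v=t-1..u. exp (- v\<^sup>2 / 2)"
  have "(?I has_vector_derivative exp (- t\<^sup>2 / 2)) (at t within {t-1..t+1})"
    by (rule interval_integral_FTC2) (auto intro!: continuous_intros)
  then have "(?I has_vector_derivative exp (- t\<^sup>2 / 2)) (at t)"
    by (subst has_vector_derivative_within_open[of _ "{t-1<..<t+1}", symmetric])
       (auto elim: has_vector_derivative_within_subset)
  then have "((\<lambda>u. gauss_tail (t-1) - ?I u) has_real_derivative - exp (- t\<^sup>2 / 2)) (at t)"
    by (auto intro!: derivative_eq_intros simp: has_real_derivative_iff_has_vector_derivative)
  then show ?thesis
  proof (rule has_field_derivative_transform_within_open[where S="{t-1<..}"])
    show "gauss_tail (t-1) - ?I u = gauss_tail u" if "u \<in> {t-1<..}" for u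
      using gauss_tail_split[of "t-1" u] that by simp
  qed auto
qed

lemma has_real_derivative_gauss_tail_comp [derivative_intros]:
  "(g has_real_derivative g') (at x within S) \<Longrightarrow>
   ((\<lambda>x. gauss_tail (g x)) has_real_derivative - exp (- (g x)\<^sup>2 / 2) * g') (at x within S)"
  by (rule DERIV_chain2[OF gauss_tail_has_real_derivative])

lemma gauss_tail_tendsto_0: "(gauss_tail \<longlongrightarrow> 0) at_top"
proof -
  have "((\<lambda>b. LBINT v:{0..b}. exp (- v\<^sup>2 / 2)) \<longlongrightarrow> gauss_tail 0) at_top"
    unfolding gauss_tail_def
    by (intro tendsto_set_lebesgue_integral_at_top set_integrable_gauss) auto
  then have "((\<lambda>b. gauss_tail 0 - (LBINT v:{0..b}. exp (- v\<^sup>2 / 2))) \<longlongrightarrow> 0) at_top"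
    by (auto intro: tendsto_eq_intros)
  then show ?thesis
  proof (rule Lim_transform_eventually)
    show "\<forall>\<^sub>F b in at_top. gauss_tail 0 - (LBINT v:{0..b}. exp (- v\<^sup>2 / 2)) = gauss_tail b"
      using eventually_ge_at_top[of "0::real"]
      by eventually_elim (auto simp: gauss_tail_split interval_integral_Icc)
  qed
qed

lemma set_integral_lborel_scale:
  fixes g :: "real \<Rightarrow> real"
  assumes "c \<noteq> 0"
  shows "(LBINT v:A. g v) = \<bar>c\<bar> * (LBINT w:{w. c * w \<in> A}. g (c * w))"
  using lborel_integral_real_affine[OF assms, of "\<lambda>v. indicator A v * g v" 0]
  by (simp add: set_lebesgue_integral_def indicator_def)

lemma Erfc_eq_gauss_tail: "Erfc y = sqrt 2 / sqrt pi * gauss_tail (sqrt 2 * y)"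
proof -
  have "{w. w / sqrt 2 \<in> {y..}} = {sqrt 2 * y..}"
    by (auto simp: field_simps)
  then have "(LBINT v:{y..}. exp (- v\<^sup>2)) = gauss_tail (sqrt 2 * y) / sqrt 2"
    using set_integral_lborel_scale[where c="1 / sqrt 2" and g="\<lambda>v. exp (- v\<^sup>2)" and A="{y..}"]
    by (simp add: gauss_tail_def power_divide)
  moreover have "2 / sqrt 2 = sqrt (2::real)"
    by (simp add: real_div_sqrt)
  ultimately show ?thesis
    unfolding Erfc_def by (metis times_divide_eq_left times_divide_eq_right)
qed

lemma N_eq_gauss_tail: "N x = gauss_tail (- x) / sqrt (2 * pi)"
proof -
  have "{w. - w \<in> {..x}} = {- x..}"
    by auto
  then have "(LBINT v:{..x}. exp (- v\<^sup>2 / 2)) = gauss_tail (- x)"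
    using set_integral_lborel_scale[where c="-1" and g="\<lambda>v. exp (- v\<^sup>2 / 2)" and A="{..x}"]
    by (simp add: gauss_tail_def)
  then show ?thesis
    unfolding N_def by simp
qed

definition mills_ratio :: "real \<Rightarrow> real" where
  "mills_ratio t = exp (t\<^sup>2 / 2) * gauss_tail t"

lemma mills_ratio_has_real_derivative:
  "(mills_ratio has_real_derivative t * mills_ratio t - 1) (at t)"
proof -
  have "exp (t\<^sup>2 / 2) * exp (- t\<^sup>2 / 2) = 1"
    by (simp add: exp_minus field_simps)
  then show ?thesis
    unfolding mills_ratio_def[abs_def]
    by (auto intro!: derivative_eq_intros simp: algebra_simps)
qed

lemma has_real_derivative_mills_ratio_comp [derivative_intros]:
  "(g has_real_derivative g') (at x within S) \<Longrightarrow>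
   ((\<lambda>x. mills_ratio (g x)) has_real_derivative (g x * mills_ratio (g x) - 1) * g') (at x within S)"
  by (rule DERIV_chain2[OF mills_ratio_has_real_derivative])

lemma continuous_on_mills_ratio_comp [continuous_intros]:
  "continuous_on S g \<Longrightarrow> continuous_on S (\<lambda>x. mills_ratio (g x))"
  by (metis DERIV_isCont continuous_at_imp_continuous_on continuous_on_compose2
      mills_ratio_has_real_derivative subset_UNIV)

lemma gauss_tail_lower_bound: "t / (1 + t\<^sup>2) * exp (- t\<^sup>2 / 2) \<le> gauss_tail t"
proof -
  define L where "L s = gauss_tail s - s / (1 + s\<^sup>2) * exp (- s\<^sup>2 / 2)" for s
  have L_deriv: "(L has_real_derivative - 2 * exp (- s\<^sup>2 / 2) / (1 + s\<^sup>2)\<^sup>2) (at s)" for s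
  proof -
    have "1 + s\<^sup>2 \<noteq> 0"
      by (smt (verit) zero_le_power2)
    then show ?thesis
      unfolding L_def[abs_def]
      by (auto intro!: derivative_eq_intros) (simp add: divide_simps power2_eq_square; simp add: algebra_simps)
  qed
  have "((\<lambda>s::real. s / (1 + s\<^sup>2) * exp (- s\<^sup>2 / 2)) \<longlongrightarrow> 0) at_top"
    by real_asymp
  then have "(L \<longlongrightarrow> 0) at_top"
    unfolding L_def[abs_def] using gauss_tail_tendsto_0 tendsto_diff by fastforce
  moreover have "\<forall>\<^sub>F s in at_top. L s \<le> L t"
    using eventually_ge_at_top[of t]
  proof eventually_elim
    case (elim s)
    show ?case
      by (rule deriv_nonpos_imp_antimono[OF L_deriv _ elim]) (simp add: divide_nonpos_pos)
  qed
  ultimately have "0 \<le> L t"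
    by (intro tendsto_le[OF trivial_limit_at_top_linorder tendsto_const])
  then show ?thesis
    by (simp add: L_def)
qed

lemma mills_ratio_lower_bound: "t / (1 + t\<^sup>2) \<le> mills_ratio t"
proof -
  have "t / (1 + t\<^sup>2) = exp (t\<^sup>2 / 2) * (t / (1 + t\<^sup>2) * exp (- t\<^sup>2 / 2))"
    by (metis exp_minus_inverse minus_divide_left mult.left_commute mult_1_right)
  also have "\<dots> \<le> mills_ratio t"
    unfolding mills_ratio_def using gauss_tail_lower_bound by (intro mult_left_mono) auto
  finally show ?thesis .
qed

lemma mono_times_mills_ratio: "mono (\<lambda>t. t * mills_ratio t)"
proof (rule monoI)
  fix a b :: real
  assume "a \<le> b"
  have deriv: "((\<lambda>t. t * mills_ratio t) has_real_derivative (1 + t\<^sup>2) * mills_ratio t - t) (at t)" for t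
    by (auto intro!: derivative_eq_intros simp: algebra_simps power2_eq_square)
  have nonneg: "0 \<le> (1 + t\<^sup>2) * mills_ratio t - t" for t
  proof -
    have "0 < 1 + t\<^sup>2"
      by (simp add: add_pos_nonneg)
    then show ?thesis
      using mills_ratio_lower_bound[of t] by (simp add: field_simps)
  qed
  show "a * mills_ratio a \<le> b * mills_ratio b"
    using deriv_nonneg_imp_mono[OF deriv nonneg \<open>a \<le> b\<close>] by simp
qed

definition F :: "real \<Rightarrow> real" where
  "F u = gauss_tail (- u) + exp (- u\<^sup>2 / 2) * mills_ratio (5 * u)"

definition K :: "real \<Rightarrow> real" where
  "K v = gauss_tail (- v) + exp (- v\<^sup>2 / 2) / (6 * v)"

lemma F_has_real_derivative:
  "(F has_real_derivative 4 * exp (- u\<^sup>2 / 2) * (6 * u * mills_ratio (5 * u) - 1)) (at u)"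
  unfolding F_def[abs_def] by (auto intro!: derivative_eq_intros simp: algebra_simps)

lemma K_has_real_derivative:
  "v \<noteq> 0 \<Longrightarrow> (K has_real_derivative exp (- v\<^sup>2 / 2) * (5 * v\<^sup>2 - 1) / (6 * v\<^sup>2)) (at v)"
  unfolding K_def[abs_def]
  by (auto intro!: derivative_eq_intros) (simp add: field_simps power2_eq_square)

lemma K_le_F:
  assumes "0 < u" and "1 \<le> 6 * u * mills_ratio (5 * u)"
  shows "K u \<le> F u"
proof -
  have "1 / (6 * u) \<le> mills_ratio (5 * u)"
    using assms by (simp add: divide_le_eq mult.commute)
  then have "exp (- u\<^sup>2 / 2) * (1 / (6 * u)) \<le> exp (- u\<^sup>2 / 2) * mills_ratio (5 * u)"
    by (intro mult_left_mono) auto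
  then show ?thesis
    by (simp add: K_def F_def)
qed

lemma K_inv_sqrt5_le:
  assumes "0 < v"
  shows "K (1 / sqrt 5) \<le> K v"
proof -
  let ?c = "1 / sqrt 5 :: real"
  have c: "0 < ?c" "5 * ?c\<^sup>2 = 1"
    by (simp_all add: power_divide)
  have deriv: "(K has_real_derivative exp (- x\<^sup>2 / 2) * (5 * x\<^sup>2 - 1) / (6 * x\<^sup>2)) (at x)"
    if "0 < x" for x
    using that by (intro K_has_real_derivative) auto
  show ?thesis
  proof (cases "v \<le> ?c")
    case True
    show ?thesis
    proof (rule deriv_nonpos_imp_antimono[OF deriv _ True])
      fix x
      assume x: "x \<in> {v..?c}"
      then show "0 < x"
        using assms by auto
      have "x\<^sup>2 \<le> ?c\<^sup>2"
        using x assms by (intro power_mono) auto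
      then show "exp (- x\<^sup>2 / 2) * (5 * x\<^sup>2 - 1) / (6 * x\<^sup>2) \<le> 0"
        using c by (intro divide_nonpos_nonneg mult_nonneg_nonpos) auto
    qed
  next
    case False
    show ?thesis
    proof (rule deriv_nonneg_imp_mono[OF deriv])
      fix x
      assume x: "x \<in> {?c..v}"
      then show "0 < x"
        using less_le_trans[OF c(1)] by auto
      have "?c\<^sup>2 \<le> x\<^sup>2"
        using x c by (intro power_mono) auto
      then show "0 \<le> exp (- x\<^sup>2 / 2) * (5 * x\<^sup>2 - 1) / (6 * x\<^sup>2)"
        using c by (intro divide_nonneg_nonneg mult_nonneg_nonneg) auto
    qed (use False in auto)
  qed
qed

lemma K_inv_sqrt5_le_F:
  assumes "0 \<le> u"
  shows "K (1 / sqrt 5) \<le> F u"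
proof -
  define P where "P w = 6 * w * mills_ratio (5 * w) - 1" for w
  have P_mono: "P a \<le> P b" if "a \<le> b" for a b
    using monoD[OF mono_times_mills_ratio, of "5 * a" "5 * b"] that by (simp add: P_def)
  have P_crit: "0 \<le> P (1 / sqrt 5)"
    using mills_ratio_lower_bound[of "sqrt 5"] by (simp add: P_def real_div_sqrt field_simps)
  have F_ge: "K (1 / sqrt 5) \<le> F w" if "0 \<le> w" "0 \<le> P w" for w
  proof -
    have "0 < w"
      using that by (cases "w = 0") (auto simp: P_def)
    then show ?thesis
      using K_inv_sqrt5_le K_le_F that(2) P_def order_trans by fastforce
  qed
  show ?thesis
  proof (cases "0 \<le> P u")
    case True
    with F_ge assms show ?thesis .
  next
    case False
    then have "u \<le> 1 / sqrt 5"
      using P_mono P_crit by (meson linorder_le_cases order_trans)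
    moreover have "continuous_on {u..1 / sqrt 5} P"
      unfolding P_def by (intro continuous_intros)
    ultimately obtain w where w: "u \<le> w" "P w = 0"
      using IVT'[of P u 0 "1 / sqrt 5"] False P_crit by auto
    have "F w \<le> F u"
    proof (rule deriv_nonpos_imp_antimono[OF F_has_real_derivative _ w(1)])
      fix x
      assume "x \<in> {u..w}"
      then have "P x \<le> 0"
        using P_mono w by fastforce
      then show "4 * exp (- x\<^sup>2 / 2) * (6 * x * mills_ratio (5 * x) - 1) \<le> 0"
        by (simp add: P_def mult_nonneg_nonpos)
    qed
    with F_ge[of w] w assms show ?thesis
      by simp
  qed
qed

lemma f_eq_F: "f x = F (x / 2) / sqrt (2 * pi)"
proof -
  have "exp (- (x / 2)\<^sup>2 / 2) * exp ((5 * (x / 2))\<^sup>2 / 2) = exp (3 * x\<^sup>2)"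
    by (simp add: exp_add[symmetric] power_mult_distrib power_divide)
  moreover have "1 / 2 * (sqrt 2 / sqrt pi) = 1 / sqrt (2 * pi)"
    by (simp add: real_sqrt_mult field_simps)
  ultimately show ?thesis
    unfolding f_def F_def mills_ratio_def Erfc_eq_gauss_tail
    by (simp add: field_simps)
qed

lemma lower_bound_eq_K:
  "N (1 / sqrt 5) + 1/12 * sqrt (10 / pi) * exp (- 1/10) = K (1 / sqrt 5) / sqrt (2 * pi)"
proof -
  have "sqrt (10 / pi) * sqrt (2 * pi) = sqrt (2\<^sup>2 * 5)"
    by (simp add: real_sqrt_mult[symmetric])
  also have "\<dots> = 2 * sqrt 5"
    unfolding real_sqrt_mult real_sqrt_abs by simp
  finally have "1/12 * sqrt (10 / pi) = sqrt 5 / 6 / sqrt (2 * pi)"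
    by (simp add: field_simps)
  moreover have "exp (- (1 / sqrt 5)\<^sup>2 / 2) = exp (- 1 / (10::real))"
    by (simp add: power_divide)
  ultimately show ?thesis
    unfolding N_eq_gauss_tail K_def by (simp add: field_simps)
qed

theorem lemma3p1:
  fixes x :: real
  assumes "x \<ge> 0"
  shows "f x \<ge> N (1 / sqrt 5) + 1/12 * sqrt (10 / pi) * exp (- 1/10)"
proof -
  have "K (1 / sqrt 5) \<le> F (x / 2)"
    using K_inv_sqrt5_le_F assms by simp
  then show ?thesis
    unfolding f_eq_F lower_bound_eq_K by (simp add: divide_right_mono)
qed

end
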